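(* Let $X$ be a finite-dimensional real Banach space and let $A \subset X$ be a bounded set with $d(0, A) > 0$. Let $I$ be an index set with $m$ elements and $\{x_i : i \in I\} \subset S_X$, and assume $\overline{A} \cap \bigcup_{i \in I} x_i^{\perp} = \emptyset$. If $\{B(y_i, r_i)\}_{i \in I}$ covers $A$ for some $y_i \in \mathbb{R}^+ x_i$ and $r_i > 0$ with $\|y_i\| \ge r_i$ for all $i \in I$, then for every selection $\phi$ of the subdifferential mapping $\partial\|\cdot\|$, $\sup_{i \in I} \phi(x_i)(x) > 0$ for every $x \in \overline{A}$.
   Context: $d(0,A)=\inf\{\|a\|:a\in A\}$; $\overline{A}$ is the closure. $x_i^{\perp} = \{ y \in X : \|x_i + \mu y\| \ge \|x_i\| \text{ for all } \mu \in \mathbb{R}\}$ (Birkhoff–James orthogonality). $\mathbb{R}^+ x_i = \{ t x_i : t > 0\}$; $B(c,r) = \{ z : \|c - z\| < r\}$. $\partial\|x\| = \{ x^* \in S_{X^*} : x^*(x) = \|x\|\}$ for $x \neq 0$; a selection of $\partial\|\cdot\|$ is a map $\phi$ with $\phi(x) \in \partial\|x\|$ for each non-zero $x$. *)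

theory Defs
  imports "HOL-Analysis.Analysis"
begin

definition dist0 :: "'a::real_normed_vector set \<Rightarrow> real" where
  "dist0 A = Inf (norm ` A)"

definition bj_orth :: "'a::real_normed_vector \<Rightarrow> 'a set" where
  "bj_orth x = {y. \<forall>\<mu>::real. norm (x + \<mu> *\<^sub>R y) \<ge> norm x}"

text \<open>Subdifferential of the norm at x \<noteq> 0: norm-one continuous linear
  functionals attaining the norm at x.\<close>
definition norm_subdiff :: "'a::real_normed_vector \<Rightarrow> ('a \<Rightarrow> real) set" where
  "norm_subdiff x = {f. bounded_linear f \<and> onorm f = 1 \<and> f x = norm x}"

definition subdiff_selection :: "('a::real_normed_vector \<Rightarrow> ('a \<Rightarrow> real)) \<Rightarrow> bool" where
  "subdiff_selection \<phi> \<longleftrightarrow> (\<forall>x. x \<noteq> 0 \<longrightarrow> \<phi> x \<in> norm_subdiff x)"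

end

theory Submission
  imports Defs
begin

text \<open>A point \<open>z\<close> of \<open>closure A\<close> lies in one of the closed balls \<open>cball (y i) (r i)\<close>.
  A norming functional \<open>f = \<phi> (x i)\<close> of \<open>x i\<close> also norms \<open>y i\<close>, so
  \<open>f (y i) - f z \<le> norm (y i - z) \<le> r i \<le> norm (y i) = f (y i)\<close>, i.e. \<open>f z \<ge> 0\<close>.
  Equality \<open>f z = 0\<close> is excluded because the kernel of a norming functional of \<open>x i\<close>
  lies in \<open>bj_orth (x i)\<close>, which misses \<open>closure A\<close>.\<close>

lemma norm_subdiff_le_norm:
  assumes "f \<in> norm_subdiff x"
  shows "f v \<le> norm v"
proof -
  have "bounded_linear f" "onorm f = 1"
    using assms by (auto simp: norm_subdiff_def)
  then have "norm (f v) \<le> norm v"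
    using onorm by fastforce
  then show ?thesis
    by simp
qed

lemma norm_subdiff_scaleR:
  assumes "f \<in> norm_subdiff x" and "0 \<le> t"
  shows "f \<in> norm_subdiff (t *\<^sub>R x)"
  using assms by (auto simp: norm_subdiff_def linear_simps)

lemma norm_subdiff_nonneg_on_cball:
  assumes f: "f \<in> norm_subdiff y" and "r \<le> norm y" and "z \<in> cball y r"
  shows "0 \<le> f z"
proof -
  have lin: "bounded_linear f" and fy: "f y = norm y"
    using f by (auto simp: norm_subdiff_def)
  have "f y - f z = f (y - z)"
    using lin by (simp add: linear_simps)
  also have "\<dots> \<le> norm (y - z)"
    using f by (rule norm_subdiff_le_norm)
  also have "\<dots> \<le> norm y"
    using assms by (simp add: dist_norm)
  finally show ?thesis
    using fy by simp
qed

lemma bj_orth_if_norm_subdiff_vanishes: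
  assumes f: "f \<in> norm_subdiff x" and "f z = 0"
  shows "z \<in> bj_orth x"
  unfolding bj_orth_def
proof (intro CollectI allI)
  fix \<mu> :: real
  have "f (x + \<mu> *\<^sub>R z) = norm x"
    using f assms(2) by (simp add: norm_subdiff_def linear_simps)
  then show "norm x \<le> norm (x + \<mu> *\<^sub>R z)"
    using norm_subdiff_le_norm[OF f] by metis
qed

lemma closure_UN_ball_subset:
  assumes "finite I"
  shows "closure (\<Union>i\<in>I. ball (c i) (e i)) \<subseteq> (\<Union>i\<in>I. cball (c i) (e i))"
  using assms by (intro closure_minimal closed_UN) auto

theorem mainTheorem9:
  fixes A :: "'a::banach set" and I :: "'i set" and m :: nat
    and x y :: "'i \<Rightarrow> 'a" and r :: "'i \<Rightarrow> real"
  assumes fin_dim: "\<exists>B. finite B \<and> span B = (UNIV :: 'a set)"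
    and bounded: "bounded A"
    and dpos: "dist0 A > 0"
    and card: "finite I" "card I = m"
    and unit: "\<forall>i\<in>I. norm (x i) = 1"
    and disj: "closure A \<inter> (\<Union>i\<in>I. bj_orth (x i)) = {}"
    and ray: "\<forall>i\<in>I. \<exists>t>0. y i = t *\<^sub>R x i"
    and rpos: "\<forall>i\<in>I. r i > 0"
    and big: "\<forall>i\<in>I. norm (y i) \<ge> r i"
    and cover: "A \<subseteq> (\<Union>i\<in>I. ball (y i) (r i))"
  shows "\<forall>\<phi>. subdiff_selection \<phi> \<longrightarrow>
           (\<forall>z\<in>closure A. (SUP i\<in>I. \<phi> (x i) z) > 0)"
proof (intro allI impI ballI)
  fix \<phi> :: "'a \<Rightarrow> 'a \<Rightarrow> real" and z
  assume sel: "subdiff_selection \<phi>" and z: "z \<in> closure A"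
  have "z \<in> (\<Union>i\<in>I. cball (y i) (r i))"
    using closure_mono[OF cover] closure_UN_ball_subset[OF card(1)] z by blast
  then obtain i where i: "i \<in> I" and zi: "z \<in> cball (y i) (r i)"
    by blast
  obtain t where "t > 0" and yi: "y i = t *\<^sub>R x i"
    using ray i by blast
  have f: "\<phi> (x i) \<in> norm_subdiff (x i)"
    using sel unit i unfolding subdiff_selection_def by force
  have "\<phi> (x i) \<in> norm_subdiff (y i)"
    using norm_subdiff_scaleR[OF f] \<open>t > 0\<close> yi by simp
  then have "0 \<le> \<phi> (x i) z"
    using norm_subdiff_nonneg_on_cball big i zi by blast
  moreover have "\<phi> (x i) z \<noteq> 0"
    using bj_orth_if_norm_subdiff_vanishes[OF f] disj z i by blast
  moreover have "\<phi> (x i) z \<le> (SUP j\<in>I. \<phi> (x j) z)"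
    using i card(1) by (intro cSUP_upper) auto
  ultimately show "(SUP i\<in>I. \<phi> (x i) z) > 0"
    by linarith
qed

end
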